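(* Assume (A1) with constant $R$ and (A3) with constant $C_h$. Then for every $x\in\mathcal{C}$, if $\beta>\beta_1(x)$, the point $x-t\nabla g(x)$ belongs to $\mathcal{C}$ for all $t\in[0,t_1(x)]$, where $$t_1(x)=\min\!\left(\sqrt{\frac{R}{2C_h}}\frac{1}{\|\nabla g(x)\|},\ \frac{(2\beta\sigma_{\min}(\mathrm{D}h(x))^2-\sigma_1(\mathrm{D}h(x))C_\lambda(x))R}{2C_h\|\nabla g(x)\|^2},\ \frac{1}{2\beta\|\mathrm{D}h(x)\|_{\mathrm{op}}^2}\right).$$
   Context: Let $\mathcal{E}$ be a Euclidean space with inner product $\langle\cdot,\cdot\rangle$ and norm $\|\cdot\|$ (2-norm on $\mathbb{R}^m$), and $f\colon\mathcal{E}\to\mathbb{R}$, $h\colon\mathcal{E}\to\mathbb{R}^m$ be $C^\infty$. $\mathrm{D}h(x)$ is the differential, $\mathrm{D}h(x)^*$ its adjoint, $\sigma_1$ and $\sigma_{\min}=\sigma_m$ the largest and $m$-th singular values. $\mathcal{D}=\{x:\operatorname{rank}\mathrm{D}h(x)=m\}$; for $x\in\mathcal{D}$, $\lambda(x)=(\mathrm{D}h(x)^* )^\dagger[\nabla f(x)]$ (Moore–Penrose), smooth on $\mathcal{D}$. For $\beta\ge0$, Fletcher's augmented Lagrangian is $g(x)=f(x)-\langle h(x),\lambda(x)\rangle+\beta\|h(x)\|^2$. (A1): there are $R,\underline{\sigma}>0$ with $\sigma_{\min}(\mathrm{D}h(x))\ge\underline{\sigma}$ for all $x\in\mathcal{C}=\{x:\|h(x)\|\le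 R\}$. (A3): there is $C_h>0$ such that for all $x\in\mathcal{C}$, $v\in\mathcal{E}$: $h(x+v)=h(x)+\mathrm{D}h(x)[v]+E(x,v)$ with $\|E(x,v)\|\le C_h\|v\|^2$. For $x\in\mathcal{C}$: $C_\lambda(x)=\|\mathrm{D}\lambda(x)\|_{\mathrm{op}}$ and $\beta_1(x)=\sigma_1(\mathrm{D}h(x))C_\lambda(x)/(2\sigma_{\min}(\mathrm{D}h(x))^2)$. *)

theory Defs
  imports "HOL-Analysis.Analysis"
begin

text \<open>C-infinity: there is a family of iterated derivatives F k x [v1,...,vk] = D^k f(x)[v1,...,vk],
  with F 0 x [] = f x and each x |-> F k x vs Frechet differentiable with derivative
  v |-> F (k+1) x (v # vs).\<close>
definition smooth :: "('a::real_normed_vector \<Rightarrow> 'b::real_normed_vector) \<Rightarrow> bool" where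
  "smooth f \<longleftrightarrow> (\<exists>F :: nat \<Rightarrow> 'a \<Rightarrow> 'a list \<Rightarrow> 'b.
      (\<forall>x. F 0 x [] = f x) \<and>
      (\<forall>k x vs. length vs = k \<longrightarrow>
          ((\<lambda>y. F k y vs) has_derivative (\<lambda>v. F (Suc k) x (v # vs))) (at x)))"

definition Dmap :: "('a::real_normed_vector \<Rightarrow> 'b::real_normed_vector) \<Rightarrow> 'a \<Rightarrow> 'a \<Rightarrow> 'b" where
  "Dmap h x = frechet_derivative h (at x)"

definition grad :: "('a::real_inner \<Rightarrow> real) \<Rightarrow> 'a \<Rightarrow> 'a" where
  "grad f x = (SOME u. GDERIV f x :> u)"

definition sigma1 :: "('a::real_inner \<Rightarrow> real^'m::finite) \<Rightarrow> real" where
  "sigma1 A = onorm A"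

text \<open>m-th singular value of A : E -> R^m, i.e. sqrt of the smallest eigenvalue of A A^*,
  written as min over unit y in R^m of norm (A^* y).\<close>
definition sigma_min :: "('a::real_inner \<Rightarrow> real^'m::finite) \<Rightarrow> real" where
  "sigma_min A = Inf {norm (adjoint A y) | y. norm y = 1}"

definition mp_pinv :: "('a::real_inner \<Rightarrow> 'b::real_inner) \<Rightarrow> 'b \<Rightarrow> 'a" where
  "mp_pinv A = (THE B. linear B \<and> A \<circ> B \<circ> A = A \<and> B \<circ> A \<circ> B = B \<and>
       adjoint (A \<circ> B) = A \<circ> B \<and> adjoint (B \<circ> A) = B \<circ> A)"

definition flambda :: "('a::euclidean_space \<Rightarrow> real) \<Rightarrow> ('a \<Rightarrow> real^'m::finite) \<Rightarrow> 'a \<Rightarrow> real^'m" where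
  "flambda f h x = mp_pinv (adjoint (Dmap h x)) (grad f x)"

definition fletcher :: "('a::euclidean_space \<Rightarrow> real) \<Rightarrow> ('a \<Rightarrow> real^'m::finite) \<Rightarrow> real \<Rightarrow> 'a \<Rightarrow> real" where
  "fletcher f h \<beta> x = f x - inner (h x) (flambda f h x) + \<beta> * (norm (h x))\<^sup>2"

definition C_lambda :: "('a::euclidean_space \<Rightarrow> real) \<Rightarrow> ('a \<Rightarrow> real^'m::finite) \<Rightarrow> 'a \<Rightarrow> real" where
  "C_lambda f h x = onorm (Dmap (flambda f h) x)"

definition beta1 :: "('a::euclidean_space \<Rightarrow> real) \<Rightarrow> ('a \<Rightarrow> real^'m::finite) \<Rightarrow> 'a \<Rightarrow> real" where
  "beta1 f h x = sigma1 (Dmap h x) * C_lambda f h x / (2 * (sigma_min (Dmap h x))\<^sup>2)"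

definition t1 :: "('a::euclidean_space \<Rightarrow> real) \<Rightarrow> ('a \<Rightarrow> real^'m::finite) \<Rightarrow> real \<Rightarrow> real \<Rightarrow> real \<Rightarrow> 'a \<Rightarrow> real" where
  "t1 f h \<beta> R Ch x =
     (let G = norm (grad (fletcher f h \<beta>) x); A = Dmap h x in
      min (sqrt (R / (2 * Ch)) * (1 / G))
          (min ((2 * \<beta> * (sigma_min A)\<^sup>2 - sigma1 A * C_lambda f h x) * R / (2 * Ch * G\<^sup>2))
               (1 / (2 * \<beta> * (onorm A)\<^sup>2))))"

end

theory Submission
  imports Defs
begin

text \<open>Write A = Dh(x) and u = grad g(x). Testing the derivative of g against A^* z, the
  terms coming from f cancel, because lambda(x) solves the normal equations
  A A^* lambda = A grad f(x). What remains is A u = 2 beta A A^* h(x) + w with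
  |w| <= sigma_1(A) C_lambda(x) |h(x)|. By (A3), h(x - t u) = (I - 2 beta t A A^*) h(x) - t w
  up to an error C_h t^2 |u|^2, and for 2 beta t |A|^2 <= 1 the operator I - 2 beta t A A^* is
  positive semidefinite with norm at most 1 - 2 beta t sigma_min(A)^2. Hence
  |h(x - t u)| <= (1 - t delta) |h(x)| + C_h t^2 |u|^2 with
  delta = 2 beta sigma_min(A)^2 - sigma_1(A) C_lambda(x), and the second bound in t_1(x)
  makes the right-hand side at most R. That C_lambda(x) is the norm of a genuine derivative
  follows from Cramer's rule applied to the normal equations, whose Gram matrix is
  invertible near x since sigma_min(A) > 0.\<close>

section \<open>Singular values and the damped Gram step\<close>

lemma norm_adjoint_le:
  fixes A :: "'a::euclidean_space \<Rightarrow> 'b::euclidean_space"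
  assumes bA: "bounded_linear A"
  shows "norm (adjoint A z) \<le> onorm A * norm z"
proof -
  have lA: "linear A" using bA bounded_linear.linear by blast
  have "(norm (adjoint A z))\<^sup>2 = A (adjoint A z) \<bullet> z"
    by (simp add: power2_norm_eq_inner adjoint_works[OF lA])
  also have "\<dots> \<le> norm (A (adjoint A z)) * norm z" by (rule norm_cauchy_schwarz)
  also have "\<dots> \<le> onorm A * norm (adjoint A z) * norm z"
    by (intro mult_right_mono onorm[OF bA]) simp
  finally have "norm (adjoint A z) * norm (adjoint A z) \<le> (onorm A * norm z) * norm (adjoint A z)"
    by (simp add: power2_eq_square algebra_simps)
  then show ?thesis
    using onorm_pos_le[OF bA] by (cases "adjoint A z = 0") auto
qed

lemma sigma_min_nonneg:
  fixes A :: "'a::real_inner \<Rightarrow> real^'m::finite"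
  shows "0 \<le> sigma_min A"
proof -
  have "norm (axis undefined (1::real) :: real^'m) = 1" by simp
  then have "{norm (adjoint A y) | y :: real^'m. norm y = 1} \<noteq> {}" by blast
  then show ?thesis unfolding sigma_min_def by (rule cInf_greatest) auto
qed

lemma sigma_min_mult_norm_le:
  fixes A :: "'a::euclidean_space \<Rightarrow> real^'m::finite"
  assumes "linear A"
  shows "sigma_min A * norm z \<le> norm (adjoint A z)"
proof (cases "z = 0")
  case False
  then have "sigma_min A \<le> norm (adjoint A (z /\<^sub>R norm z))" unfolding sigma_min_def
    by (intro cInf_lower) (auto intro: bdd_belowI[where m=0])
  also have "adjoint A (z /\<^sub>R norm z) = adjoint A z /\<^sub>R norm z"
    using linear_cmul[OF adjoint_linear[OF assms]] by simp
  finally show ?thesis using False by (simp add: field_simps)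
qed simp

lemma sigma_min_le_sigma1:
  fixes A :: "'a::euclidean_space \<Rightarrow> real^'m::finite"
  assumes bA: "bounded_linear A"
  shows "sigma_min A \<le> sigma1 A"
proof -
  let ?e = "axis undefined 1 :: real^'m"
  have "sigma_min A * norm ?e \<le> norm (adjoint A ?e)"
    using sigma_min_mult_norm_le bA bounded_linear.linear by blast
  also have "\<dots> \<le> onorm A * norm ?e" by (rule norm_adjoint_le[OF bA])
  finally show ?thesis unfolding sigma1_def by simp
qed

lemma inj_adjoint_if_sigma_min_pos:
  fixes A :: "'a::euclidean_space \<Rightarrow> real^'m::finite"
  assumes "linear A" and "sigma_min A > 0"
  shows "inj (adjoint A)"
proof -
  have "z = 0" if "adjoint A z = 0" for z
    using sigma_min_mult_norm_le[OF assms(1), of z] assms(2) that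
    by (simp add: mult_le_0_iff)
  then show ?thesis by (metis adjoint_linear[OF assms(1)] linear_injective_0)
qed

lemma discriminant_le_if_quadratic_nonneg:
  fixes a b c :: real
  assumes nonneg: "\<And>r. 0 \<le> a + 2 * r * b + r\<^sup>2 * c" and "0 \<le> c"
  shows "b\<^sup>2 \<le> a * c"
proof (cases "c = 0")
  case True
  have "b = 0"
  proof (rule ccontr)
    assume "b \<noteq> 0"
    then have "a + 2 * (-(a + 1) / (2 * b)) * b = -1" by (simp add: field_simps)
    then show False using nonneg[of "-(a + 1) / (2 * b)"] True by simp
  qed
  then show ?thesis using True by simp
next
  case False
  then have c: "c > 0" using assms(2) by simp
  have "0 \<le> a + 2 * (-b/c) * b + (-b/c)\<^sup>2 * c" by (rule nonneg)
  also have "\<dots> = a - b\<^sup>2 / c" using c by (simp add: field_simps power2_eq_square)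
  finally show ?thesis using c by (simp add: field_simps)
qed

lemma psd_Cauchy_Schwarz:
  fixes N :: "'a::real_inner \<Rightarrow> 'a"
  assumes "linear N" and sym: "\<And>u v. N u \<bullet> v = u \<bullet> N v" and psd: "\<And>v. 0 \<le> v \<bullet> N v"
  shows "(u \<bullet> N v)\<^sup>2 \<le> (u \<bullet> N u) * (v \<bullet> N v)"
proof (rule discriminant_le_if_quadratic_nonneg)
  interpret N: linear N by fact
  fix r :: real
  have "(u + r *\<^sub>R v) \<bullet> N (u + r *\<^sub>R v) = u \<bullet> N u + 2 * r * (u \<bullet> N v) + r\<^sup>2 * (v \<bullet> N v)"
    using sym[of v u] by (simp add: N.add N.scale algebra_simps inner_commute power2_eq_square)
  then show "0 \<le> u \<bullet> N u + 2 * r * (u \<bullet> N v) + r\<^sup>2 * (v \<bullet> N v)" by (metis psd)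
qed (rule psd)

lemma psd_norm_le:
  fixes N :: "'a::real_inner \<Rightarrow> 'a"
  assumes lN: "linear N" and sym: "\<And>u v. N u \<bullet> v = u \<bullet> N v"
    and psd: "\<And>v. 0 \<le> v \<bullet> N v" and bound: "\<And>v. v \<bullet> N v \<le> c * (norm v)\<^sup>2"
  shows "norm (N v) \<le> c * norm v"
proof (cases "v = 0")
  case True
  then show ?thesis using linear_0[OF lN] by simp
next
  case False
  have "0 \<le> c * (norm v)\<^sup>2" using psd[of v] bound[of v] by linarith
  then have c: "0 \<le> c" using False by (simp add: zero_le_mult_iff)
  have "((norm (N v))\<^sup>2)\<^sup>2 \<le> (N v \<bullet> N (N v)) * (v \<bullet> N v)"
    using psd_Cauchy_Schwarz[OF lN sym psd, of "N v" v] by (simp add: power2_norm_eq_inner)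
  also have "\<dots> \<le> (c * (norm (N v))\<^sup>2) * (c * (norm v)\<^sup>2)"
    by (intro mult_mono bound psd order_trans[OF psd bound])
  also have "\<dots> = (c * norm v * norm (N v))\<^sup>2"
    by (simp add: power2_eq_square algebra_simps)
  finally have "(norm (N v))\<^sup>2 \<le> c * norm v * norm (N v)"
    by (rule power2_le_imp_le) (use c in simp)
  then show ?thesis
    using c by (cases "N v = 0") (simp_all add: power2_eq_square)
qed

lemma norm_sub_scaled_gram_le:
  fixes A :: "'a::euclidean_space \<Rightarrow> real^'m::finite"
  assumes bA: "bounded_linear A" and "0 \<le> s" and "s * (sigma1 A)\<^sup>2 \<le> 1"
  shows "norm (z - s *\<^sub>R A (adjoint A z)) \<le> (1 - s * (sigma_min A)\<^sup>2) * norm z"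
proof -
  have lA: "linear A" using bA bounded_linear.linear by blast
  define N where "N v = v - s *\<^sub>R A (adjoint A v)" for v
  have form: "v \<bullet> N v = (norm v)\<^sup>2 - s * (norm (adjoint A v))\<^sup>2" for v
  proof -
    have "v \<bullet> A (adjoint A v) = adjoint A v \<bullet> adjoint A v"
      by (metis adjoint_works[OF lA] inner_commute)
    then show ?thesis unfolding N_def by (simp add: inner_diff_right power2_norm_eq_inner)
  qed
  show ?thesis unfolding N_def[symmetric]
  proof (rule psd_norm_le)
    have "linear (\<lambda>v. A (adjoint A v))"
      using linear_compose[OF adjoint_linear[OF lA] lA] by (simp add: o_def)
    then show "linear N"
      unfolding N_def linear_iff by (simp add: algebra_simps)
    show "N u \<bullet> v = u \<bullet> N v" for u v
    proof -
      have "A (adjoint A u) \<bullet> v = u \<bullet> A (adjoint A v)"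
        by (metis adjoint_works[OF lA] inner_commute)
      then show ?thesis unfolding N_def by (simp add: inner_diff_left inner_diff_right)
    qed
    show "0 \<le> v \<bullet> N v" for v
    proof -
      have "norm (adjoint A v) \<le> sigma1 A * norm v"
        unfolding sigma1_def by (rule norm_adjoint_le[OF bA])
      then have "(norm (adjoint A v))\<^sup>2 \<le> (sigma1 A * norm v)\<^sup>2"
        by (intro power_mono) simp_all
      then have "s * (norm (adjoint A v))\<^sup>2 \<le> (s * (sigma1 A)\<^sup>2) * (norm v)\<^sup>2"
        using \<open>0 \<le> s\<close> by (simp add: mult_left_mono power_mult_distrib mult.assoc)
      also have "\<dots> \<le> (norm v)\<^sup>2" using assms(2,3) by (intro mult_left_le_one_le) simp_all
      finally show ?thesis unfolding form by simp
    qed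
    show "v \<bullet> N v \<le> (1 - s * (sigma_min A)\<^sup>2) * (norm v)\<^sup>2" for v
    proof -
      have "(sigma_min A * norm v)\<^sup>2 \<le> (norm (adjoint A v))\<^sup>2"
        using sigma_min_mult_norm_le[OF lA] sigma_min_nonneg[of A] by (intro power_mono) auto
      then show ?thesis unfolding form using \<open>0 \<le> s\<close>
        by (simp add: algebra_simps power_mult_distrib mult_left_mono)
    qed
  qed
qed

section \<open>The Moore--Penrose pseudoinverse\<close>

definition penrose_inverse :: "('a::real_inner \<Rightarrow> 'b::real_inner) \<Rightarrow> ('b \<Rightarrow> 'a) \<Rightarrow> bool" where
  "penrose_inverse A B \<longleftrightarrow> linear B \<and> A \<circ> B \<circ> A = A \<and> B \<circ> A \<circ> B = B \<and>
     adjoint (A \<circ> B) = A \<circ> B \<and> adjoint (B \<circ> A) = B \<circ> A"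

lemma mp_pinv_eq_The_penrose_inverse: "mp_pinv A = (THE B. penrose_inverse A B)"
  unfolding mp_pinv_def penrose_inverse_def ..

lemma penrose_normal_equation:
  fixes B :: "'b::euclidean_space \<Rightarrow> 'a::euclidean_space"
  assumes lB: "linear B" and "linear C" and BCB: "B \<circ> C \<circ> B = B"
    and sym: "adjoint (B \<circ> C) = B \<circ> C"
  shows "adjoint B (B (C z)) = adjoint B z"
proof -
  have lBC: "linear (B \<circ> C)" using assms linear_compose by blast
  have "adjoint B (B (C z)) \<bullet> w = adjoint B z \<bullet> w" for w
  proof -
    have "adjoint B (B (C z)) \<bullet> w = B (C z) \<bullet> B w" by (simp add: adjoint_clauses(2)[OF lB])
    also have "\<dots> = z \<bullet> adjoint (B \<circ> C) (B w)"
      using adjoint_works[OF lBC, of z "B w"] by simp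
    also have "\<dots> = z \<bullet> B w" using BCB sym by (metis comp_apply)
    also have "\<dots> = adjoint B z \<bullet> w" by (simp add: adjoint_clauses(2)[OF lB])
    finally show ?thesis .
  qed
  then show ?thesis by (metis vector_eq_rdot)
qed

lemma inj_adjoint_comp:
  fixes B :: "'b::euclidean_space \<Rightarrow> 'a::euclidean_space"
  assumes lB: "linear B" and "inj B"
  shows "inj (adjoint B \<circ> B)"
proof -
  have lG: "linear (adjoint B \<circ> B)" using lB adjoint_linear linear_compose by blast
  have "x = 0" if "adjoint B (B x) = 0" for x
  proof -
    have "B x \<bullet> B x = 0" using adjoint_works[OF lB, of x "B x"] that by simp
    then show "x = 0" using assms by (metis inner_eq_zero_iff linear_0 injD)
  qed
  then show ?thesis using lG by (simp add: linear_injective_0)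
qed

lemma penrose_inverse_exists:
  fixes B :: "'b::euclidean_space \<Rightarrow> 'a::euclidean_space"
  assumes lB: "linear B" and iB: "inj B"
  shows "\<exists>C. penrose_inverse B C"
proof -
  define G where "G = adjoint B \<circ> B"
  have lBa: "linear (adjoint B)" by (rule adjoint_linear[OF lB])
  have lG: "linear G" unfolding G_def using lB lBa linear_compose by blast
  obtain Gi where lGi: "linear Gi" and Gi_G: "\<And>x. Gi (G x) = x" and G_Gi: "\<And>x. G (Gi x) = x"
    using linear_injective_isomorphism[OF lG inj_adjoint_comp[OF lB iB, folded G_def]] by auto
  define C where "C = Gi \<circ> adjoint B"
  have CB: "C \<circ> B = id" unfolding C_def using Gi_G by (auto simp: G_def)
  have Gi_sym: "Gi a \<bullet> b = a \<bullet> Gi b" for a b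
    using adjoint_works[OF lB, of "Gi a" "B (Gi b)"] adjoint_works[OF lB, of "Gi b" "B (Gi a)"] G_Gi
    by (simp add: G_def inner_commute)
  have "penrose_inverse B C"
    unfolding penrose_inverse_def
  proof (intro conjI)
    show "linear C" unfolding C_def using lGi lBa linear_compose by blast
    show "B \<circ> C \<circ> B = B" using CB by (metis comp_assoc comp_id)
    show "C \<circ> B \<circ> C = C" using CB by simp
    show "adjoint (C \<circ> B) = C \<circ> B" unfolding CB by (rule adjoint_unique) simp
    show "adjoint (B \<circ> C) = B \<circ> C"
    proof (rule adjoint_unique, intro allI)
      fix x y
      have "B (Gi (adjoint B x)) \<bullet> y = Gi (adjoint B x) \<bullet> adjoint B y"
        by (simp add: adjoint_works[OF lB])
      also have "\<dots> = adjoint B x \<bullet> Gi (adjoint B y)" by (rule Gi_sym)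
      also have "\<dots> = x \<bullet> B (Gi (adjoint B y))" by (simp add: adjoint_clauses(2)[OF lB])
      finally show "(B \<circ> C) x \<bullet> y = x \<bullet> (B \<circ> C) y" by (simp add: C_def)
    qed
  qed
  then show ?thesis by blast
qed

lemma penrose_inverse_unique:
  fixes B :: "'b::euclidean_space \<Rightarrow> 'a::euclidean_space"
  assumes lB: "linear B" and iB: "inj B"
    and "penrose_inverse B C1" and "penrose_inverse B C2"
  shows "C1 = C2"
proof
  fix z
  have "(adjoint B \<circ> B) (C1 z) = (adjoint B \<circ> B) (C2 z)"
    using assms(3,4) penrose_normal_equation[OF lB] unfolding penrose_inverse_def by simp
  then show "C1 z = C2 z" using inj_adjoint_comp[OF lB iB] by (meson injD)
qed

lemma mp_pinv_normal_equation:
  fixes B :: "'b::euclidean_space \<Rightarrow> 'a::euclidean_space"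
  assumes lB: "linear B" and iB: "inj B"
  shows "adjoint B (B (mp_pinv B z)) = adjoint B z"
proof -
  have "penrose_inverse B (mp_pinv B)"
    unfolding mp_pinv_eq_The_penrose_inverse
    using penrose_inverse_exists[OF assms] penrose_inverse_unique[OF assms] by (metis theI)
  then show ?thesis
    unfolding penrose_inverse_def using penrose_normal_equation[OF lB] by blast
qed

section \<open>Differentiability of the multiplier\<close>

lemma smooth_has_derivative:
  assumes "smooth f"
  shows "(f has_derivative Dmap f x) (at x)"
    and "(\<lambda>y. Dmap f y v) differentiable (at x)"
proof -
  obtain F where F0: "\<And>x. F 0 x [] = f x" and FD: "\<And>k x vs. length vs = k \<Longrightarrow>
          ((\<lambda>y. F k y vs) has_derivative (\<lambda>v. F (Suc k) x (v # vs))) (at x)"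
    using assms unfolding smooth_def by blast
  have f': "(f has_derivative (\<lambda>v. F 1 y [v])) (at y)" for y
    using FD[of "[]" 0 y] F0 by simp
  then have "Dmap f y = (\<lambda>v. F 1 y [v])" for y
    unfolding Dmap_def by (rule frechet_derivative_at[symmetric])
  with f' show "(f has_derivative Dmap f x) (at x)"
    and "(\<lambda>y. Dmap f y v) differentiable (at x)"
    using FD[of "[v]" 1 x] by (auto simp: differentiable_def)
qed

lemma grad_inner_eq:
  fixes g :: "'a::euclidean_space \<Rightarrow> real"
  assumes "(g has_derivative D) (at x)"
  shows "v \<bullet> grad g x = D v"
proof -
  have lD: "linear D" using assms has_derivative_linear by blast
  have "D = (\<lambda>v. v \<bullet> adjoint D 1)"
    using adjoint_works[OF lD] by auto
  then have "GDERIV g x :> adjoint D 1" unfolding gderiv_def using assms by simp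
  then have "GDERIV g x :> grad g x" unfolding grad_def by (rule someI)
  then have "(\<lambda>v. v \<bullet> grad g x) = D" unfolding gderiv_def
    using assms has_derivative_unique by blast
  then show ?thesis by metis
qed

definition gram_matrix :: "('a::euclidean_space \<Rightarrow> real^'m::finite) \<Rightarrow> real^'m^'m" where
  "gram_matrix A = (\<chi> i j. \<Sum>k\<in>Basis. A k $ i * A k $ j)"

lemma linear_vec_nth_expansion:
  fixes A :: "'a::euclidean_space \<Rightarrow> real^'m::finite"
  assumes "linear A"
  shows "A v $ i = (\<Sum>k\<in>Basis. (v \<bullet> k) * A k $ i)"
  using Linear_Algebra.linear_componentwise[OF assms, of v "axis i 1"] by (simp add: cart_eq_inner_axis)

lemma gram_matrix_mult_vec:
  fixes A :: "'a::euclidean_space \<Rightarrow> real^'m::finite"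
  assumes lA: "linear A"
  shows "gram_matrix A *v \<mu> = A (adjoint A \<mu>)"
proof (rule vec_eq_iff[THEN iffD2], intro allI)
  fix i
  have "(gram_matrix A *v \<mu>) $ i = (\<Sum>j\<in>UNIV. \<Sum>k\<in>Basis. A k $ i * A k $ j * \<mu> $ j)"
    by (simp add: gram_matrix_def matrix_vector_mult_def sum_distrib_right)
  also have "\<dots> = (\<Sum>k\<in>Basis. (\<Sum>j\<in>UNIV. \<mu> $ j * A k $ j) * A k $ i)"
    by (subst sum.swap) (simp add: sum_distrib_left sum_distrib_right mult_ac)
  also have "\<dots> = (\<Sum>k\<in>Basis. (adjoint A \<mu> \<bullet> k) * A k $ i)"
    by (simp add: adjoint_clauses(2)[OF lA] inner_vec_def)
  also have "\<dots> = A (adjoint A \<mu>) $ i"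
    by (rule linear_vec_nth_expansion[OF lA, symmetric])
  finally show "(gram_matrix A *v \<mu>) $ i = A (adjoint A \<mu>) $ i" .
qed

lemma det_gram_matrix_nonzero_iff:
  fixes A :: "'a::euclidean_space \<Rightarrow> real^'m::finite"
  assumes lA: "linear A"
  shows "det (gram_matrix A) \<noteq> 0 \<longleftrightarrow> inj (adjoint A)"
proof -
  have "gram_matrix A *v z = 0 \<longleftrightarrow> adjoint A z = 0" for z
  proof -
    have "z \<bullet> (gram_matrix A *v z) = adjoint A z \<bullet> adjoint A z"
      by (simp add: gram_matrix_mult_vec[OF lA] adjoint_clauses(2)[OF lA])
    then show ?thesis by (metis gram_matrix_mult_vec[OF lA] inner_eq_zero_iff inner_zero_right
          linear_0[OF lA])
  qed
  then show ?thesis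
    using matrix_left_invertible_ker[of "gram_matrix A"] invertible_left_inverse invertible_det_nz
      linear_injective_0[OF adjoint_linear[OF lA]] by metis
qed

lemma flambda_normal_equation:
  assumes lA: "linear (Dmap h y)" and "inj (adjoint (Dmap h y))"
  shows "gram_matrix (Dmap h y) *v flambda f h y = Dmap h y (grad f y)"
  using mp_pinv_normal_equation[OF adjoint_linear[OF lA] assms(2)]
  by (simp add: flambda_def adjoint_adjoint[OF lA] gram_matrix_mult_vec[OF lA])

lemma differentiable_vec_nth:
  fixes g :: "'a::real_normed_vector \<Rightarrow> real^'n::finite"
  assumes "g differentiable (at x)"
  shows "(\<lambda>y. g y $ i) differentiable (at x)"
  using differentiable_compose[OF bounded_linear_imp_differentiable[OF bounded_linear_vec_nth] assms]
  by (simp add: o_def)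

lemma differentiable_vec_lambda:
  fixes \<phi> :: "'n::finite \<Rightarrow> 'a::real_normed_vector \<Rightarrow> real"
  assumes "\<And>k. \<phi> k differentiable (at x)"
  shows "(\<lambda>y. \<chi> k. \<phi> k y) differentiable (at x)"
proof -
  have "(\<lambda>y. \<chi> k. \<phi> k y) = (\<lambda>y. \<Sum>k\<in>UNIV. \<phi> k y *\<^sub>R axis k 1)"
    by (rule ext, subst basis_expansion[symmetric]) (simp add: scalar_mult_eq_scaleR)
  moreover have "(\<lambda>y. \<Sum>k\<in>UNIV. \<phi> k y *\<^sub>R axis k (1::real)) differentiable (at x)"
    by (intro differentiable_sum differentiable_scaleR assms differentiable_const ballI finite)
  ultimately show ?thesis by simp
qed

lemma differentiable_prod:
  fixes f :: "'i \<Rightarrow> 'a::real_normed_vector \<Rightarrow> real"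
  assumes "\<And>i. i \<in> I \<Longrightarrow> f i differentiable (at x)"
  shows "(\<lambda>x. \<Prod>i\<in>I. f i x) differentiable (at x)"
proof -
  from assms obtain D where "\<And>i. i \<in> I \<Longrightarrow> (f i has_derivative D i) (at x)"
    unfolding differentiable_def by metis
  then show ?thesis unfolding differentiable_def using has_derivative_prod by blast
qed

lemma differentiable_det:
  fixes M :: "'a::real_normed_vector \<Rightarrow> real^'n::finite^'n"
  assumes "\<And>i j. (\<lambda>y. M y $ i $ j) differentiable (at x)"
  shows "(\<lambda>y. det (M y)) differentiable (at x)"
  unfolding det_def
  by (intro differentiable_sum differentiable_mult differentiable_const differentiable_prod
      ballI assms finite_permutations finite)

lemma linear_system_solution_differentiable:
  fixes M :: "'a::real_normed_vector \<Rightarrow> real^'n::finite^'n" and b s :: "'a \<Rightarrow> real^'n"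
  assumes M: "\<And>i j y. (\<lambda>z. M z $ i $ j) differentiable (at y)"
    and b: "\<And>i. (\<lambda>z. b z $ i) differentiable (at x)"
    and det_x: "det (M x) \<noteq> 0"
    and solves: "\<And>y. det (M y) \<noteq> 0 \<Longrightarrow> M y *v s y = b y"
  shows "s differentiable (at x)"
proof -
  define Mk where "Mk k y = (\<chi> i j. if j = k then b y $ i else M y $ i $ j)" for k y
  define \<Lambda> where "\<Lambda> y = (\<chi> k. det (Mk k y) / det (M y))" for y
  have det_Mk: "(\<lambda>y. det (Mk k y)) differentiable (at x)" for k
  proof (rule differentiable_det)
    show "(\<lambda>y. Mk k y $ i $ j) differentiable (at x)" for i j
      by (cases "j = k") (simp_all add: Mk_def M b)
  qed
  then have "\<Lambda> differentiable (at x)"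
    unfolding \<Lambda>_def
    by (intro differentiable_vec_lambda differentiable_divide det_Mk differentiable_det M det_x)
  then obtain L where L: "(\<Lambda> has_derivative L) (at x)" by (auto simp: differentiable_def)
  have "isCont (\<lambda>y. det (M y)) y" for y
    by (rule differentiable_imp_continuous_within[OF differentiable_det[OF M]])
  then have "open {y. det (M y) \<noteq> 0}"
    by (intro open_Collect_neq continuous_at_imp_continuous_on ballI continuous_on_const)
  moreover have "\<Lambda> y = s y" if "det (M y) \<noteq> 0" for y
    using cramer[OF that, of "s y" "b y"] solves[OF that] by (simp add: \<Lambda>_def Mk_def)
  ultimately have "(s has_derivative L) (at x)"
    by (intro has_derivative_transform_within_open[OF L]) (use det_x in auto)
  then show ?thesis by (auto simp: differentiable_def)
qed

lemma flambda_differentiable: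
  assumes f: "smooth f" and h: "smooth h" and "sigma_min (Dmap h x) > 0"
  shows "flambda f h differentiable (at x)"
proof (rule linear_system_solution_differentiable)
  have lA: "linear (Dmap h y)" for y
    using smooth_has_derivative(1)[OF h] has_derivative_linear by blast
  have dA: "(\<lambda>y. Dmap h y v $ i) differentiable (at z)" for v i z
    by (intro differentiable_vec_nth smooth_has_derivative(2)[OF h])
  show "(\<lambda>y. gram_matrix (Dmap h y) $ i $ j) differentiable (at z)" for i j z
    unfolding gram_matrix_def by (simp add: dA)
  have "Dmap h y (grad f y) $ i = (\<Sum>k\<in>Basis. Dmap f y k * Dmap h y k $ i)" for y i
    by (subst linear_vec_nth_expansion[OF lA])
      (simp add: grad_inner_eq[OF smooth_has_derivative(1)[OF f]] inner_commute)
  then show "(\<lambda>y. Dmap h y (grad f y) $ i) differentiable (at x)" for i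
    by (simp add: dA smooth_has_derivative(2)[OF f])
  show "det (gram_matrix (Dmap h x)) \<noteq> 0"
    using det_gram_matrix_nonzero_iff[OF lA] inj_adjoint_if_sigma_min_pos[OF lA assms(3)] by blast
  show "gram_matrix (Dmap h y) *v flambda f h y = Dmap h y (grad f y)"
    if "det (gram_matrix (Dmap h y)) \<noteq> 0" for y
    using that flambda_normal_equation[OF lA] det_gram_matrix_nonzero_iff[OF lA] by blast
qed

section \<open>The gradient of Fletcher's augmented Lagrangian\<close>

lemma fletcher_has_derivative:
  assumes "(f has_derivative Df) (at x)" and "(h has_derivative Dh) (at x)"
    and "(flambda f h has_derivative L) (at x)"
  shows "(fletcher f h \<beta> has_derivative
     (\<lambda>v. Df v - h x \<bullet> L v - Dh v \<bullet> flambda f h x + 2 * \<beta> * (h x \<bullet> Dh v))) (at x)"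
proof -
  have "fletcher f h \<beta> = (\<lambda>y. f y - h y \<bullet> flambda f h y + \<beta> * (h y \<bullet> h y))"
    unfolding fletcher_def by (simp add: power2_norm_eq_inner)
  then show ?thesis
    by (auto intro!: derivative_eq_intros assms simp: algebra_simps inner_commute)
qed

lemma C_lambda_nonneg:
  assumes "flambda f h differentiable (at x)"
  shows "0 \<le> C_lambda f h x"
  using assms unfolding C_lambda_def Dmap_def frechet_derivative_works
  by (intro onorm_pos_le has_derivative_bounded_linear)

lemma fletcher_grad_deviation:
  fixes f :: "'a::euclidean_space \<Rightarrow> real" and h :: "'a \<Rightarrow> real^'m::finite"
  assumes f: "smooth f" and h: "smooth h" and sm: "sigma_min (Dmap h x) > 0"
  defines "A \<equiv> Dmap h x"
  shows "norm (A (grad (fletcher f h \<beta>) x) - (2 * \<beta>) *\<^sub>R A (adjoint A (h x)))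
           \<le> sigma1 A * C_lambda f h x * norm (h x)"
proof -
  define L where "L = Dmap (flambda f h) x"
  define w where "w = A (grad (fletcher f h \<beta>) x) - (2 * \<beta>) *\<^sub>R A (adjoint A (h x))"
  have hD: "(h has_derivative A) (at x)" unfolding A_def by (rule smooth_has_derivative(1)[OF h])
  have bA: "bounded_linear A" and lA: "linear A"
    using hD has_derivative_bounded_linear has_derivative_linear by blast+
  have lamD: "(flambda f h has_derivative L) (at x)"
    using flambda_differentiable[OF f h sm] unfolding L_def Dmap_def frechet_derivative_works .
  have bL: "bounded_linear L" using lamD has_derivative_bounded_linear by blast
  have gD: "(fletcher f h \<beta> has_derivative (\<lambda>v. Dmap f x v - h x \<bullet> L v
      - A v \<bullet> flambda f h x + 2 * \<beta> * (h x \<bullet> A v))) (at x)"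
    by (rule fletcher_has_derivative[OF smooth_has_derivative(1)[OF f] hD lamD])
  have normal: "A (adjoint A (flambda f h x)) = A (grad f x)"
    using flambda_normal_equation[OF lA[unfolded A_def] inj_adjoint_if_sigma_min_pos[OF _ sm]] lA
    by (simp add: A_def gram_matrix_mult_vec)
  have w_inner: "w \<bullet> z = - (h x \<bullet> L (adjoint A z))" for z
  proof -
    have "A (grad (fletcher f h \<beta>) x) \<bullet> z = adjoint A z \<bullet> grad (fletcher f h \<beta>) x"
      by (metis adjoint_works[OF lA] inner_commute)
    also have "\<dots> = Dmap f x (adjoint A z) - h x \<bullet> L (adjoint A z)
        - A (adjoint A z) \<bullet> flambda f h x + 2 * \<beta> * (h x \<bullet> A (adjoint A z))"
      by (rule grad_inner_eq[OF gD])
    also have "Dmap f x (adjoint A z) = A (adjoint A z) \<bullet> flambda f h x"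
      using grad_inner_eq[OF smooth_has_derivative(1)[OF f], of "adjoint A z"] normal
      by (metis adjoint_works[OF lA] inner_commute)
    also have "h x \<bullet> A (adjoint A z) = A (adjoint A (h x)) \<bullet> z"
      by (metis adjoint_works[OF lA] inner_commute)
    finally show ?thesis unfolding w_def by (simp add: inner_diff_left)
  qed
  have "norm w * norm w \<le> norm (h x) * (C_lambda f h x * (sigma1 A * norm w))"
  proof -
    have "norm w * norm w = - (h x \<bullet> L (adjoint A w))"
      using w_inner[of w] by (metis power2_eq_square power2_norm_eq_inner)
    also have "\<dots> \<le> norm (h x) * norm (L (adjoint A w))"
      using Cauchy_Schwarz_ineq2[of "h x" "L (adjoint A w)"] by (simp add: abs_le_iff)
    also have "\<dots> \<le> norm (h x) * (C_lambda f h x * norm (adjoint A w))"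
      using onorm[OF bL] by (simp add: C_lambda_def L_def mult_left_mono)
    also have "\<dots> \<le> norm (h x) * (C_lambda f h x * (sigma1 A * norm w))"
      using norm_adjoint_le[OF bA] C_lambda_nonneg[OF flambda_differentiable[OF f h sm]]
      by (simp add: sigma1_def mult_left_mono)
    finally show ?thesis .
  qed
  then have "norm w \<le> sigma1 A * C_lambda f h x * norm (h x)"
    using C_lambda_nonneg[OF flambda_differentiable[OF f h sm]] onorm_pos_le[OF bA]
    by (cases "w = 0") (auto simp: sigma1_def mult_ac)
  then show ?thesis unfolding w_def .
qed

section \<open>The gradient step\<close>

lemma linearized_step_norm_le:
  fixes A :: "'a::euclidean_space \<Rightarrow> real^'m::finite"
  assumes bA: "bounded_linear A" and "0 \<le> \<beta>" "0 \<le> t" and step: "2 * \<beta> * t * (sigma1 A)\<^sup>2 \<le> 1"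
    and dev: "norm (A u - (2 * \<beta>) *\<^sub>R A (adjoint A z)) \<le> c * norm z"
  shows "norm (z - t *\<^sub>R A u) \<le> (1 - t * (2 * \<beta> * (sigma_min A)\<^sup>2 - c)) * norm z"
proof -
  have "z - t *\<^sub>R A u = (z - (2 * \<beta> * t) *\<^sub>R A (adjoint A z))
      - t *\<^sub>R (A u - (2 * \<beta>) *\<^sub>R A (adjoint A z))"
    by (simp add: algebra_simps)
  also have "norm \<dots> \<le> (1 - (2 * \<beta> * t) * (sigma_min A)\<^sup>2) * norm z + t * (c * norm z)"
  proof (rule norm_triangle_le_diff[OF add_mono])
    show "norm (z - (2 * \<beta> * t) *\<^sub>R A (adjoint A z)) \<le> (1 - (2 * \<beta> * t) * (sigma_min A)\<^sup>2) * norm z"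
      using assms(2,3) step by (intro norm_sub_scaled_gram_le[OF bA]) simp_all
    show "norm (t *\<^sub>R (A u - (2 * \<beta>) *\<^sub>R A (adjoint A z))) \<le> t * (c * norm z)"
      using dev assms(3) by (simp add: mult_left_mono)
  qed
  finally show ?thesis by (simp add: algebra_simps)
qed

lemma step_mult_decrease_rate_le_one:
  fixes A :: "'a::euclidean_space \<Rightarrow> real^'m::finite"
  assumes bA: "bounded_linear A" and "0 \<le> \<beta>" "0 \<le> t" "0 \<le> c"
    and step: "2 * \<beta> * t * (sigma1 A)\<^sup>2 \<le> 1"
  shows "t * (2 * \<beta> * (sigma_min A)\<^sup>2 - c) \<le> 1"
proof -
  have "t * (2 * \<beta> * (sigma_min A)\<^sup>2 - c) \<le> 2 * \<beta> * t * (sigma_min A)\<^sup>2"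
    using assms(3,4) by (simp add: algebra_simps)
  also have "\<dots> \<le> 2 * \<beta> * t * (sigma1 A)\<^sup>2"
    using sigma_min_le_sigma1[OF bA] sigma_min_nonneg[of A] assms(2,3)
    by (intro mult_left_mono power_mono) auto
  finally show ?thesis using step by linarith
qed

lemma norm_step_le_linearization:
  assumes "linear A" and remainder: "\<And>v. norm (h (x + v) - h x - A v) \<le> C * (norm v)\<^sup>2"
  shows "norm (h (x - t *\<^sub>R u)) \<le> norm (h x - t *\<^sub>R A u) + C * (norm (t *\<^sub>R u))\<^sup>2"
proof -
  have "norm (h (x - t *\<^sub>R u) - (h x - t *\<^sub>R A u)) \<le> C * (norm (t *\<^sub>R u))\<^sup>2"
    using remainder[of "- (t *\<^sub>R u)"] by (simp add: linear_neg linear_cmul assms(1) algebra_simps)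
  then show ?thesis
    using norm_triangle_sub[of "h (x - t *\<^sub>R u)" "h x - t *\<^sub>R A u"] by linarith
qed

lemma contraction_with_quadratic_error_le:
  fixes t \<delta> \<rho> R C G :: real
  assumes "0 \<le> t" "t * \<delta> \<le> 1" "\<rho> \<le> R" "0 < C" and t: "t \<le> \<delta> * R / (2 * C * G\<^sup>2)"
  shows "(1 - t * \<delta>) * \<rho> + C * (t * G)\<^sup>2 \<le> R"
proof (cases "G = 0")
  case True
  then show ?thesis using assms by simp
next
  case False
  then have CtG: "C * t * G\<^sup>2 \<le> \<delta> * R / 2"
    using t \<open>0 < C\<close> by (simp add: field_simps)
  have "0 \<le> C * t * G\<^sup>2" using assms(1,4) by simp
  then have "0 \<le> \<delta> * R" using CtG by linarith
  have "C * (t * G)\<^sup>2 = t * (C * t * G\<^sup>2)" by (simp add: power2_eq_square)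
  also have "\<dots> \<le> t * (\<delta> * R / 2)" using CtG assms(1) by (rule mult_left_mono)
  finally have "C * (t * G)\<^sup>2 \<le> t * (\<delta> * R / 2)" .
  moreover have "(1 - t * \<delta>) * \<rho> \<le> (1 - t * \<delta>) * R"
    using assms by (intro mult_left_mono) auto
  moreover have "0 \<le> t * (\<delta> * R)" using \<open>0 \<le> \<delta> * R\<close> assms(1) by simp
  ultimately show ?thesis by (simp add: algebra_simps)
qed

lemma le_t1D:
  assumes "0 \<le> t" and "t \<le> t1 f h \<beta> R Ch x" and "0 \<le> \<beta>"
  shows "2 * \<beta> * t * (sigma1 (Dmap h x))\<^sup>2 \<le> 1"
    and "t \<le> (2 * \<beta> * (sigma_min (Dmap h x))\<^sup>2 - sigma1 (Dmap h x) * C_lambda f h x) * R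
              / (2 * Ch * (norm (grad (fletcher f h \<beta>) x))\<^sup>2)"
proof -
  have "t \<le> 1 / (2 * \<beta> * (sigma1 (Dmap h x))\<^sup>2)"
    using assms(2) unfolding t1_def Let_def sigma1_def by simp
  then show "2 * \<beta> * t * (sigma1 (Dmap h x))\<^sup>2 \<le> 1"
    using assms(1,3) by (cases "2 * \<beta> * (sigma1 (Dmap h x))\<^sup>2 = 0") (auto simp: field_simps)
  show "t \<le> (2 * \<beta> * (sigma_min (Dmap h x))\<^sup>2 - sigma1 (Dmap h x) * C_lambda f h x) * R
              / (2 * Ch * (norm (grad (fletcher f h \<beta>) x))\<^sup>2)"
    using assms(2) unfolding t1_def Let_def sigma1_def by simp
qed

theorem mainTheorem7:
  fixes f :: "'a::euclidean_space \<Rightarrow> real"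
    and h :: "'a \<Rightarrow> real^'m::finite"
    and R \<sigma> Ch \<beta> t :: real and x :: 'a
  assumes smooth_f: "smooth f" and smooth_h: "smooth h"
    and A1: "R > 0" "\<sigma> > 0" "\<forall>y. norm (h y) \<le> R \<longrightarrow> sigma_min (Dmap h y) \<ge> \<sigma>"
    and A3: "Ch > 0"
      "\<forall>y v. norm (h y) \<le> R \<longrightarrow> norm (h (y + v) - h y - Dmap h y v) \<le> Ch * (norm v)\<^sup>2"
    and xC: "norm (h x) \<le> R"
    and beta: "\<beta> \<ge> 0" "\<beta> > beta1 f h x"
    and t: "0 \<le> t" "t \<le> t1 f h \<beta> R Ch x"
  shows "norm (h (x - t *\<^sub>R grad (fletcher f h \<beta>) x)) \<le> R"
proof -
  let ?A = "Dmap h x" and ?u = "grad (fletcher f h \<beta>) x"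
  define \<delta> where "\<delta> = 2 * \<beta> * (sigma_min ?A)\<^sup>2 - sigma1 ?A * C_lambda f h x"
  have bA: "bounded_linear ?A"
    using smooth_has_derivative(1)[OF smooth_h] has_derivative_bounded_linear by blast
  have sm: "sigma_min ?A > 0" using A1(2,3) xC by force
  have "0 \<le> sigma1 ?A * C_lambda f h x"
    using C_lambda_nonneg[OF flambda_differentiable[OF smooth_f smooth_h sm]] onorm_pos_le[OF bA]
    by (simp add: sigma1_def)
  then have "t * \<delta> \<le> 1"
    unfolding \<delta>_def by (rule step_mult_decrease_rate_le_one[OF bA beta(1) t(1) _ le_t1D(1)[OF t beta(1)]])
  moreover have "norm (h x - t *\<^sub>R ?A ?u) \<le> (1 - t * \<delta>) * norm (h x)"
    unfolding \<delta>_def using beta(1) t(1) le_t1D(1)[OF t beta(1)]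
      fletcher_grad_deviation[OF smooth_f smooth_h sm]
    by (intro linearized_step_norm_le[OF bA]) (simp_all add: mult_ac)
  moreover have "norm (h (x - t *\<^sub>R ?u)) \<le> norm (h x - t *\<^sub>R ?A ?u) + Ch * (t * norm ?u)\<^sup>2"
    using norm_step_le_linearization[OF bounded_linear.linear[OF bA], of h x Ch t ?u] A3(2) xC t(1)
    by simp
  ultimately have "norm (h (x - t *\<^sub>R ?u)) \<le> (1 - t * \<delta>) * norm (h x) + Ch * (t * norm ?u)\<^sup>2"
    by linarith
  also have "\<dots> \<le> R"
    using t(1) \<open>t * \<delta> \<le> 1\<close> xC A3(1) le_t1D(2)[OF t beta(1)] unfolding \<delta>_def
    by (rule contraction_with_quadratic_error_le)
  finally show ?thesis .
qed

end
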